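(* Assume $c_1>c_2>0$ and $\sigma_0\sigma_1\neq0$. Let $\delta>0$ be sufficiently small, and let $\Phi\in B^6_{2\delta}(0)$ with $\phi_2^2+\phi_3^2>0$. Then the following identities hold. - For $i\in\{1,6\}$: $\gamma^i_{23}+\gamma^i_{32}=0$ and $\gamma^i_{45}+\gamma^i_{54}=0$. - For $i=3$: $-c^3_{32}+\gamma^3_{32}=0$ and $\gamma^3_{45}+\gamma^3_{54}=0$. - For $i=4$: $-c^4_{45}+\gamma^4_{45}=0$ and $\gamma^4_{23}+\gamma^4_{32}=0$. In other words, in the decomposed equations for $w^1,w^3,w^4,w^6$ the terms $w^2w^3$ and $w^4w^5$ do not appear. Moreover, there is a constant $C$ such that each of the four quantities $$-c^2_{23}+\gamma^2_{23},\qquad \gamma^2_{45}+\gamma^2_{54},\qquad -c^5_{54}+\gamma^5_{54},\qquad \gamma^5_{23}+\gamma^5_{32}$$ has absolute value at most $C|\lambda_2(\Phi)-\lambda_3(\Phi)|$ on this set. That is, in the equations for $w^2,w^5$ the coefficients of $w^2w^3$ and $w^4w^5$ carry a factor $\lambda_2-\lambda_3$.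
   Context: Set $$a=c_1^2+2\sigma_0\phi_1,\quad b=c_2^2+2\sigma_1\phi_1,\quad c=2\sigma_1\phi_2,\quad d=2\sigma_1\phi_3,\quad \Delta=(a-b)^2+4(c^2+d^2).$$ Eigenvalues: $$\lambda_1=-\lambda_6=\sqrt{\tfrac12(a+b)+\tfrac12\sqrt\Delta},\qquad\lambda_2=-\lambda_5=\sqrt b,\qquad\lambda_3=-\lambda_4=\sqrt{\tfrac12(a+b)-\tfrac12\sqrt\Delta}.$$ Right eigenvectors (column vectors): $$r_1=\big(\tfrac{\lambda_1^2-b}{2\sigma_1},\phi_2,\phi_3,-\tfrac{\lambda_1(\lambda_1^2-b)}{2\sigma_1},-\lambda_1\phi_2,-\lambda_1\phi_3\big),$$ $$r_2=(0,\phi_3,-\phi_2,0,-\lambda_2\phi_3,\lambda_2\phi_2),$$ $$r_3=\big(\tfrac{\lambda_3^2-b}{2\sigma_1},\phi_2,\phi_3,-\tfrac{\lambda_3(\lambda_3^2-b)}{2\sigma_1},-\lambda_3\phi_2,-\lambda_3\phi_3\big),$$ $$r_4=\big(\tfrac{\lambda_3^2-b}{2\sigma_1},\phi_2,\phi_3,\tfrac{\lambda_3(\lambda_3^2-b)}{2\sigma_1},\lambda_3\phi_2,\lambda_3\phi_3\big),$$ $$r_5=(0,\phi_3,-\phi_2,0,\lambda_2\phi_3,-\lambda_2\phi_2),$$ $$r_6=\big(\tfrac{\lambda_1^2-b}{2\sigma_1},\phi_2,\phi_3,\tfrac{\lambda_1(\lambda_1^2-b)}{2\sigma_1},\lambda_1\phi_2,\lambda_1\phi_3\big).$$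 Left eigenvectors (row vectors): $$l^1=\tfrac1K\big(\tfrac{\lambda_1^2-b}{2\sigma_1},\phi_2,\phi_3,-\tfrac{\lambda_1^2-b}{2\sigma_1\lambda_1},-\tfrac{\phi_2}{\lambda_1},-\tfrac{\phi_3}{\lambda_1}\big),$$ $$l^2=\tfrac1M\big(0,\phi_3,-\phi_2,0,-\tfrac{\phi_3}{\lambda_2},\tfrac{\phi_2}{\lambda_2}\big),$$ $$l^3=\tfrac1N\big(\tfrac{\lambda_3^2-b}{2\sigma_1},\phi_2,\phi_3,-\tfrac{\lambda_3^2-b}{2\sigma_1\lambda_3},-\tfrac{\phi_2}{\lambda_3},-\tfrac{\phi_3}{\lambda_3}\big),$$ $$l^4=\tfrac1N\big(\tfrac{\lambda_3^2-b}{2\sigma_1},\phi_2,\phi_3,\tfrac{\lambda_3^2-b}{2\sigma_1\lambda_3},\tfrac{\phi_2}{\lambda_3},\tfrac{\phi_3}{\lambda_3}\big),$$ $$l^5=\tfrac1M\big(0,\phi_3,-\phi_2,0,\tfrac{\phi_3}{\lambda_2},-\tfrac{\phi_2}{\lambda_2}\big),$$ $$l^6=\tfrac1K\big(\tfrac{\lambda_1^2-b}{2\sigma_1},\phi_2,\phi_3,\tfrac{\lambda_1^2-b}{2\sigma_1\lambda_1},\tfrac{\phi_2}{\lambda_1},\tfrac{\phi_3}{\lambda_1}\big),$$ where $$K=\tfrac{\Delta+(a-b)\sqrt\Delta}{4\sigma_1^2},\qquad M=2(\phi_2^2+\phi_3^2),\qquad N=\tfrac{\Delta-(a-b)\sqrt\Delta}{4\sigma_1^2},$$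 so that $l^ir_j=\delta^i_j$. Coefficients: $c^i_{im}=\nabla_\Phi\lambda_i\cdot r_m$. For vector fields $r,s$ on $\mathbb{R}^6$, let $\nabla_\Phi r\cdot s=\sum_j s_j\,\partial_{\phi_j}r$ denote the derivative of $r$ in direction $s$. For $m\neq i$: $$\gamma^i_{im}=-(\lambda_i-\lambda_m)\,l^i\cdot(\nabla_\Phi r_i\cdot r_m-\nabla_\Phi r_m\cdot r_i).$$ For $k\neq i$ and $m\neq i$: $$\gamma^i_{km}=-(\lambda_k-\lambda_m)\,l^i\cdot(\nabla_\Phi r_k\cdot r_m).$$ These are the coefficients of the wave decomposition $w^i=l^i\partial_x\Phi$: $$(\partial_t+\lambda_i\partial_x)w^i=-c^i_{ii}(w^i)^2+\sum_{m\neq i}(-c^i_{im}+\gamma^i_{im})w^mw^i+\sum_{m\ne i,\,k\ne i,\,m\ne k}\gamma^i_{km}w^kw^m.$$ *)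

theory Defs
  imports "HOL-Analysis.Analysis"
begin

definition pa :: "real \<Rightarrow> real \<Rightarrow> real \<Rightarrow> real \<Rightarrow> real^6 \<Rightarrow> real" where
  "pa c1 c2 s0 s1 P = c1^2 + 2* s0*(P$1)"
definition pb :: "real \<Rightarrow> real \<Rightarrow> real \<Rightarrow> real \<Rightarrow> real^6 \<Rightarrow> real" where
  "pb c1 c2 s0 s1 P = c2^2 + 2* s1*(P$1)"
definition pc :: "real \<Rightarrow> real \<Rightarrow> real \<Rightarrow> real \<Rightarrow> real^6 \<Rightarrow> real" where
  "pc c1 c2 s0 s1 P = 2* s1*(P$2)"
definition pd :: "real \<Rightarrow> real \<Rightarrow> real \<Rightarrow> real \<Rightarrow> real^6 \<Rightarrow> real" where
  "pd c1 c2 s0 s1 P = 2* s1*(P$3)"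
definition pDelta :: "real \<Rightarrow> real \<Rightarrow> real \<Rightarrow> real \<Rightarrow> real^6 \<Rightarrow> real" where
  "pDelta c1 c2 s0 s1 P = (pa c1 c2 s0 s1 P - pb c1 c2 s0 s1 P)^2
     + 4*((pc c1 c2 s0 s1 P)^2 + (pd c1 c2 s0 s1 P)^2)"

definition lam :: "real \<Rightarrow> real \<Rightarrow> real \<Rightarrow> real \<Rightarrow> nat \<Rightarrow> real^6 \<Rightarrow> real" where
  "lam c1 c2 s0 s1 i P =
    (let a = pa c1 c2 s0 s1 P; b = pb c1 c2 s0 s1 P; D = pDelta c1 c2 s0 s1 P;
         l1 = sqrt ((a+b)/2 + sqrt D / 2); l2 = sqrt b; l3 = sqrt ((a+b)/2 - sqrt D / 2)
     in if i = 1 then l1 else if i = 2 then l2 else if i = 3 then l3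
        else if i = 4 then - l3 else if i = 5 then - l2 else if i = 6 then - l1 else 0)"

definition rv :: "real \<Rightarrow> real \<Rightarrow> real \<Rightarrow> real \<Rightarrow> nat \<Rightarrow> real^6 \<Rightarrow> real^6" where
  "rv c1 c2 s0 s1 i P =
    (let b = pb c1 c2 s0 s1 P; l1 = lam c1 c2 s0 s1 1 P; l2 = lam c1 c2 s0 s1 2 P;
         l3 = lam c1 c2 s0 s1 3 P; p2 = P$2; p3 = P$3
     in if i = 1 then vector [(l1^2 - b)/(2* s1), p2, p3, - l1*(l1^2 - b)/(2* s1), - l1*p2, - l1*p3]
        else if i = 2 then vector [0, p3, - p2, 0, - l2*p3, l2*p2]
        else if i = 3 then vector [(l3^2 - b)/(2* s1), p2, p3, - l3*(l3^2 - b)/(2* s1), - l3*p2, - l3*p3]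
        else if i = 4 then vector [(l3^2 - b)/(2* s1), p2, p3, l3*(l3^2 - b)/(2* s1), l3*p2, l3*p3]
        else if i = 5 then vector [0, p3, - p2, 0, l2*p3, - l2*p2]
        else if i = 6 then vector [(l1^2 - b)/(2* s1), p2, p3, l1*(l1^2 - b)/(2* s1), l1*p2, l1*p3]
        else 0)"

definition pK :: "real \<Rightarrow> real \<Rightarrow> real \<Rightarrow> real \<Rightarrow> real^6 \<Rightarrow> real" where
  "pK c1 c2 s0 s1 P = (pDelta c1 c2 s0 s1 P + (pa c1 c2 s0 s1 P - pb c1 c2 s0 s1 P) * sqrt (pDelta c1 c2 s0 s1 P)) / (4* s1^2)"
definition pM :: "real^6 \<Rightarrow> real" where
  "pM P = 2*((P$2)^2 + (P$3)^2)"
definition pN :: "real \<Rightarrow> real \<Rightarrow> real \<Rightarrow> real \<Rightarrow> real^6 \<Rightarrow> real" where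
  "pN c1 c2 s0 s1 P = (pDelta c1 c2 s0 s1 P - (pa c1 c2 s0 s1 P - pb c1 c2 s0 s1 P) * sqrt (pDelta c1 c2 s0 s1 P)) / (4* s1^2)"

definition lv :: "real \<Rightarrow> real \<Rightarrow> real \<Rightarrow> real \<Rightarrow> nat \<Rightarrow> real^6 \<Rightarrow> real^6" where
  "lv c1 c2 s0 s1 i P =
    (let b = pb c1 c2 s0 s1 P; l1 = lam c1 c2 s0 s1 1 P; l2 = lam c1 c2 s0 s1 2 P;
         l3 = lam c1 c2 s0 s1 3 P; p2 = P$2; p3 = P$3;
         K = pK c1 c2 s0 s1 P; M = pM P; N = pN c1 c2 s0 s1 P
     in if i = 1 then (1/K) *\<^sub>R vector [(l1^2 - b)/(2* s1), p2, p3, - (l1^2 - b)/(2* s1*l1), - p2/l1, - p3/l1]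
        else if i = 2 then (1/M) *\<^sub>R vector [0, p3, - p2, 0, - p3/l2, p2/l2]
        else if i = 3 then (1/N) *\<^sub>R vector [(l3^2 - b)/(2* s1), p2, p3, - (l3^2 - b)/(2* s1*l3), - p2/l3, - p3/l3]
        else if i = 4 then (1/N) *\<^sub>R vector [(l3^2 - b)/(2* s1), p2, p3, (l3^2 - b)/(2* s1*l3), p2/l3, p3/l3]
        else if i = 5 then (1/M) *\<^sub>R vector [0, p3, - p2, 0, p3/l2, - p2/l2]
        else if i = 6 then (1/K) *\<^sub>R vector [(l1^2 - b)/(2* s1), p2, p3, (l1^2 - b)/(2* s1*l1), p2/l1, p3/l1]
        else 0)"

definition partial_s :: "(real^6 \<Rightarrow> real) \<Rightarrow> real^6 \<Rightarrow> 6 \<Rightarrow> real" where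
  "partial_s f P j = deriv (\<lambda>t. f (P + t *\<^sub>R axis j 1)) 0"
definition partial_v :: "(real^6 \<Rightarrow> real^6) \<Rightarrow> real^6 \<Rightarrow> 6 \<Rightarrow> real^6" where
  "partial_v r P j = (\<chi> k. deriv (\<lambda>t. r (P + t *\<^sub>R axis j 1) $ k) 0)"
definition dir_s :: "(real^6 \<Rightarrow> real) \<Rightarrow> real^6 \<Rightarrow> real^6 \<Rightarrow> real" where
  "dir_s f P s = (\<Sum>j\<in>UNIV. s$j * partial_s f P j)"
definition dir_v :: "(real^6 \<Rightarrow> real^6) \<Rightarrow> real^6 \<Rightarrow> real^6 \<Rightarrow> real^6" where
  "dir_v r P s = (\<Sum>j\<in>UNIV. (s$j) *\<^sub>R partial_v r P j)"

text \<open>c^i_{im} = nabla lambda_i . r_m (written ccoef i m).\<close>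
definition ccoef :: "real \<Rightarrow> real \<Rightarrow> real \<Rightarrow> real \<Rightarrow> nat \<Rightarrow> nat \<Rightarrow> real^6 \<Rightarrow> real" where
  "ccoef c1 c2 s0 s1 i m P = dir_s (lam c1 c2 s0 s1 i) P (rv c1 c2 s0 s1 m P)"

text \<open>gamma^i_{km}: for k = i the formula for gamma^i_{im}; otherwise the formula for k, m \<noteq> i.\<close>
definition gam :: "real \<Rightarrow> real \<Rightarrow> real \<Rightarrow> real \<Rightarrow> nat \<Rightarrow> nat \<Rightarrow> nat \<Rightarrow> real^6 \<Rightarrow> real" where
  "gam c1 c2 s0 s1 i k m P =
    (if k = i then
       - (lam c1 c2 s0 s1 i P - lam c1 c2 s0 s1 m P) *
         (lv c1 c2 s0 s1 i P \<bullet> (dir_v (rv c1 c2 s0 s1 i) P (rv c1 c2 s0 s1 m P)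
                                 - dir_v (rv c1 c2 s0 s1 m) P (rv c1 c2 s0 s1 i P)))
     else
       - (lam c1 c2 s0 s1 k P - lam c1 c2 s0 s1 m P) *
         (lv c1 c2 s0 s1 i P \<bullet> dir_v (rv c1 c2 s0 s1 k) P (rv c1 c2 s0 s1 m P)))"

end

theory Submission
  imports Defs
begin

text \<open>The fields r_2, r_5 lift the rotation (0, \<phi>_3, -\<phi>_2) of the (\<phi>_2, \<phi>_3)-plane, while
  \<lambda>_3 = -\<lambda>_4 depends on \<Phi> only through \<phi>_1 and \<phi>_2^2 + \<phi>_3^2, so r_2 and r_5 do not change it.
  A direct computation then shows that both brackets \<nabla>r_2\<cdot>r_3 - \<nabla>r_3\<cdot>r_2 and
  \<nabla>r_4\<cdot>r_5 - \<nabla>r_5\<cdot>r_4 equal E (0, 0, 0, 0, -\<phi>_3, \<phi>_2) with E = (\<lambda>_2 - \<lambda>_3)^2 / (2\<lambda>_2).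
  This vector is annihilated by l^1, l^3, l^4, l^6, which gives the vanishing identities, and
  l^2, l^5 pair with it to \<plusminus>1/(2\<lambda>_2). For i = 2, 5 each coefficient becomes (\<lambda>_2 - \<lambda>_3)
  times a polynomial in t = (\<lambda>_2 - \<lambda>_3)/\<lambda>_2, and 0 < \<lambda>_3 \<le> \<lambda>_2 gives t \<in> [0, 1], so C = 1 works.
  All that is needed of \<Phi> are the open conditions b > 0 and c^2 + d^2 < ab, which hold at \<Phi> = 0.\<close>

lemma vector_6 [simp]:
  "(vector [x1, x2, x3, x4, x5, x6] :: ('a::zero)^6) $ 1 = x1"
  "(vector [x1, x2, x3, x4, x5, x6] :: ('a::zero)^6) $ 2 = x2"
  "(vector [x1, x2, x3, x4, x5, x6] :: ('a::zero)^6) $ 3 = x3"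
  "(vector [x1, x2, x3, x4, x5, x6] :: ('a::zero)^6) $ 4 = x4"
  "(vector [x1, x2, x3, x4, x5, x6] :: ('a::zero)^6) $ 5 = x5"
  "(vector [x1, x2, x3, x4, x5, x6] :: ('a::zero)^6) $ 6 = x6"
  unfolding vector_def by simp_all

lemma exhaust_6:
  fixes x :: 6
  shows "x = 1 \<or> x = 2 \<or> x = 3 \<or> x = 4 \<or> x = 5 \<or> x = 6"
proof (induct x)
  case (of_int z)
  then have "z = 0 \<or> z = 1 \<or> z = 2 \<or> z = 3 \<or> z = 4 \<or> z = 5" by fastforce
  then show ?case by auto
qed

lemma forall_6: "(\<forall>i::6. P i) \<longleftrightarrow> P 1 \<and> P 2 \<and> P 3 \<and> P 4 \<and> P 5 \<and> P 6"
  by (metis exhaust_6)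

lemma UNIV_6: "UNIV = {1, 2, 3, 4, 5, 6::6}"
  using exhaust_6 by auto

lemma sum_6: "sum f (UNIV::6 set) = f 1 + f 2 + f 3 + f 4 + f 5 + f 6"
  unfolding UNIV_6 by (simp add: ac_simps)

lemma inner_vector_6:
  "vector [x1, x2, x3, x4, x5, x6] \<bullet> (vector [y1, y2, y3, y4, y5, y6] :: real^6) =
     x1*y1 + x2*y2 + x3*y3 + x4*y4 + x5*y5 + x6*y6"
  by (simp add: inner_vec_def sum_6)

lemma has_derivative_vector_6:
  assumes "(f1 has_derivative f1') F" "(f2 has_derivative f2') F" "(f3 has_derivative f3') F"
    "(f4 has_derivative f4') F" "(f5 has_derivative f5') F" "(f6 has_derivative f6') F"
  shows "((\<lambda>x. vector [f1 x, f2 x, f3 x, f4 x, f5 x, f6 x] :: real^6) has_derivative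
           (\<lambda>h. vector [f1' h, f2' h, f3' h, f4' h, f5' h, f6' h])) F"
proof -
  have vector_axis: "(vector [y1, y2, y3, y4, y5, y6] :: real^6) =
      y1 *\<^sub>R axis 1 1 + y2 *\<^sub>R axis 2 1 + y3 *\<^sub>R axis 3 1 + y4 *\<^sub>R axis 4 1
      + y5 *\<^sub>R axis 5 1 + y6 *\<^sub>R axis 6 1" for y1 y2 y3 y4 y5 y6
    by (simp add: vec_eq_iff forall_6 axis_def)
  show ?thesis
    unfolding vector_axis by (intro has_derivative_add has_derivative_scaleR_left assms)
qed

lemma has_derivative_vec_nth [derivative_intros]:
  "((\<lambda>x. x $ i) has_derivative (\<lambda>h. h $ i)) F"
  by (rule bounded_linear.has_derivative[OF bounded_linear_vec_nth has_derivative_ident])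

lemma has_derivative_along_line:
  fixes f :: "'a::real_normed_vector \<Rightarrow> 'b::real_normed_vector"
  assumes "(f has_derivative f') (at x)"
  shows "((\<lambda>t. f (x + t *\<^sub>R v)) has_derivative (\<lambda>t. t *\<^sub>R f' v)) (at 0)"
proof -
  have "((\<lambda>t::real. x + t *\<^sub>R v) has_derivative (\<lambda>t. t *\<^sub>R v)) (at 0)"
    by (auto intro!: derivative_eq_intros)
  moreover have "(f has_derivative f') (at (x + 0 *\<^sub>R v))"
    using assms by simp
  ultimately have "((\<lambda>t. f (x + t *\<^sub>R v)) has_derivative (\<lambda>t. f' (t *\<^sub>R v))) (at 0)"
    using diff_chain_at[unfolded o_def] by blast
  then show ?thesis
    using linear_scale[OF has_derivative_linear[OF assms]] by simp
qed

lemma linear_sum_axis: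
  fixes f :: "real^'n \<Rightarrow> 'b::real_vector"
  assumes "linear f"
  shows "(\<Sum>j\<in>UNIV. s $ j *\<^sub>R f (axis j 1)) = f s"
proof -
  have "(\<Sum>j\<in>UNIV. s $ j *\<^sub>R axis j 1) = s"
    using basis_expansion[of s] by (simp add: scalar_mult_eq_scaleR)
  then show ?thesis
    using linear_sum[OF assms, of "\<lambda>j. s $ j *\<^sub>R axis j 1" UNIV]
    by (simp add: linear_scale[OF assms])
qed

lemma partial_s_eq_derivative:
  assumes "(f has_derivative f') (at P)"
  shows "partial_s f P j = f' (axis j 1)"
proof -
  have "((\<lambda>t. f (P + t *\<^sub>R axis j 1)) has_real_derivative f' (axis j 1)) (at 0)"
    using has_derivative_along_line[OF assms, of "axis j 1"] unfolding has_field_derivative_def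
    by (rule has_derivative_eq_rhs) (simp add: fun_eq_iff)
  then show ?thesis
    unfolding partial_s_def by (rule DERIV_imp_deriv)
qed

lemma partial_v_eq_derivative:
  assumes "(r has_derivative r') (at P)"
  shows "partial_v r P j = r' (axis j 1)"
proof -
  have "((\<lambda>t. r (P + t *\<^sub>R axis j 1) $ k) has_real_derivative r' (axis j 1) $ k) (at 0)" for k
    using bounded_linear.has_derivative[OF bounded_linear_vec_nth
        has_derivative_along_line[OF assms, of "axis j 1"], of k] unfolding has_field_derivative_def
    by (rule has_derivative_eq_rhs) (simp add: fun_eq_iff)
  then show ?thesis
    unfolding partial_v_def by (simp add: DERIV_imp_deriv vec_eq_iff)
qed

lemma dir_s_eq_derivative:
  assumes "(f has_derivative f') (at P)"
  shows "dir_s f P s = f' s"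
  using linear_sum_axis[OF has_derivative_linear[OF assms]]
  by (simp add: dir_s_def partial_s_eq_derivative[OF assms])

lemma dir_v_eq_derivative:
  assumes "(r has_derivative r') (at P)"
  shows "dir_v r P s = r' s"
  using linear_sum_axis[OF has_derivative_linear[OF assms]]
  by (simp add: dir_v_def partial_v_eq_derivative[OF assms])

definition rot56 :: "real^6 \<Rightarrow> real^6" where
  "rot56 P = vector [0, 0, 0, 0, - P$3, P$2]"

definition rv_rot :: "(real^6 \<Rightarrow> real) \<Rightarrow> real^6 \<Rightarrow> real^6" where
  "rv_rot \<mu> Q = vector [0, Q$3, - Q$2, 0, - \<mu> Q * Q$3, \<mu> Q * Q$2]"

definition rv_rad :: "real \<Rightarrow> real \<Rightarrow> real \<Rightarrow> real \<Rightarrow> (real^6 \<Rightarrow> real) \<Rightarrow> real^6 \<Rightarrow> real^6" where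
  "rv_rad c1 c2 s0 s1 \<mu> Q =
     (let u = (\<mu> Q^2 - pb c1 c2 s0 s1 Q) / (2 * s1)
      in vector [u, Q$2, Q$3, - \<mu> Q * u, - \<mu> Q * Q$2, - \<mu> Q * Q$3])"

text \<open>The sign is that of the combination in \<gamma>^i_{im}, opposite to the usual Lie bracket.\<close>

definition bracket :: "(real^6 \<Rightarrow> real^6) \<Rightarrow> (real^6 \<Rightarrow> real^6) \<Rightarrow> real^6 \<Rightarrow> real^6" where
  "bracket r s P = dir_v r P (s P) - dir_v s P (r P)"

definition regular_state :: "real \<Rightarrow> real \<Rightarrow> real \<Rightarrow> real \<Rightarrow> real^6 \<Rightarrow> bool" where
  "regular_state c1 c2 s0 s1 P \<longleftrightarrow>
     0 < pb c1 c2 s0 s1 P \<and>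
     (pc c1 c2 s0 s1 P)^2 + (pd c1 c2 s0 s1 P)^2 < pa c1 c2 s0 s1 P * pb c1 c2 s0 s1 P \<and>
     0 < (P$2)^2 + (P$3)^2"

lemma bracket_swap: "bracket r s P = - bracket s r P"
  by (simp add: bracket_def)

lemma gam_self:
  "gam c1 c2 s0 s1 i i m P =
     - (lam c1 c2 s0 s1 i P - lam c1 c2 s0 s1 m P) *
       (lv c1 c2 s0 s1 i P \<bullet> bracket (rv c1 c2 s0 s1 i) (rv c1 c2 s0 s1 m) P)"
  by (simp add: gam_def bracket_def)

lemma gam_add_gam_swap:
  assumes "k \<noteq> i" "m \<noteq> i"
  shows "gam c1 c2 s0 s1 i k m P + gam c1 c2 s0 s1 i m k P =
     - (lam c1 c2 s0 s1 k P - lam c1 c2 s0 s1 m P) *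
       (lv c1 c2 s0 s1 i P \<bullet> bracket (rv c1 c2 s0 s1 k) (rv c1 c2 s0 s1 m) P)"
  using assms by (simp add: gam_def bracket_def algebra_simps)

context
  fixes c1 c2 s0 s1 :: real
begin

lemma lam_2: "lam c1 c2 s0 s1 2 = (\<lambda>Q. sqrt (pb c1 c2 s0 s1 Q))"
  by (simp add: lam_def Let_def fun_eq_iff)

lemma lam_3:
  "lam c1 c2 s0 s1 3 =
     (\<lambda>Q. sqrt ((pa c1 c2 s0 s1 Q + pb c1 c2 s0 s1 Q) / 2 - sqrt (pDelta c1 c2 s0 s1 Q) / 2))"
  by (simp add: lam_def Let_def fun_eq_iff)

lemma lam_4: "lam c1 c2 s0 s1 4 = (\<lambda>Q. - lam c1 c2 s0 s1 3 Q)"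
  by (simp add: lam_def Let_def fun_eq_iff)

lemma lam_5: "lam c1 c2 s0 s1 5 = (\<lambda>Q. - lam c1 c2 s0 s1 2 Q)"
  by (simp add: lam_def Let_def fun_eq_iff)

lemma rv_2: "rv c1 c2 s0 s1 2 = rv_rot (lam c1 c2 s0 s1 2)"
  by (simp add: rv_def rv_rot_def Let_def fun_eq_iff)

lemma rv_5: "rv c1 c2 s0 s1 5 = rv_rot (lam c1 c2 s0 s1 5)"
  by (simp add: rv_def rv_rot_def lam_5 Let_def fun_eq_iff)

lemma rv_3: "rv c1 c2 s0 s1 3 = rv_rad c1 c2 s0 s1 (lam c1 c2 s0 s1 3)"
  by (simp add: rv_def rv_rad_def Let_def fun_eq_iff)

lemma rv_4: "rv c1 c2 s0 s1 4 = rv_rad c1 c2 s0 s1 (lam c1 c2 s0 s1 4)"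
  by (simp add: rv_def rv_rad_def lam_4 Let_def fun_eq_iff)

lemma has_derivative_pb: "(pb c1 c2 s0 s1 has_derivative (\<lambda>h. 2 * s1 * h$1)) (at P)"
  unfolding pb_def[abs_def] by (auto intro!: derivative_eq_intros)

lemma has_derivative_lam_2:
  assumes "0 < pb c1 c2 s0 s1 P"
  shows "(lam c1 c2 s0 s1 2 has_derivative (\<lambda>h. s1 * h$1 / lam c1 c2 s0 s1 2 P)) (at P)"
  unfolding lam_2 using assms
  by (auto intro!: derivative_eq_intros has_derivative_pb simp: field_simps)

lemma has_derivative_lam_5:
  assumes "0 < pb c1 c2 s0 s1 P"
  shows "(lam c1 c2 s0 s1 5 has_derivative (\<lambda>h. s1 * h$1 / lam c1 c2 s0 s1 5 P)) (at P)"
  unfolding lam_5 using has_derivative_lam_2[OF assms]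
  by (auto intro!: derivative_eq_intros)

lemma has_derivative_lam_3:
  assumes "0 < pDelta c1 c2 s0 s1 P"
    and "0 < (pa c1 c2 s0 s1 P + pb c1 c2 s0 s1 P) / 2 - sqrt (pDelta c1 c2 s0 s1 P) / 2"
  obtains L' where "(lam c1 c2 s0 s1 3 has_derivative L') (at P)" "\<And>\<mu>. L' (rv_rot \<mu> P) = 0"
proof -
  define D' where "D' h = 4 * (pa c1 c2 s0 s1 P - pb c1 c2 s0 s1 P) * (s0 - s1) * h$1
      + 32 * s1^2 * (P$2 * h$2 + P$3 * h$3)" for h :: "real^6"
  define X' where "X' h = (s0 + s1) * h$1 - D' h / (4 * sqrt (pDelta c1 c2 s0 s1 P))" for h
  have "(pDelta c1 c2 s0 s1 has_derivative D') (at P)"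
    unfolding pDelta_def[abs_def] pa_def pb_def pc_def pd_def D'_def
    by (auto intro!: derivative_eq_intros simp: fun_eq_iff algebra_simps power2_eq_square)
  then have X: "((\<lambda>Q. (pa c1 c2 s0 s1 Q + pb c1 c2 s0 s1 Q) / 2 - sqrt (pDelta c1 c2 s0 s1 Q) / 2)
      has_derivative X') (at P)"
    unfolding pa_def pb_def X'_def using assms(1)
    by (auto intro!: derivative_eq_intros simp: fun_eq_iff field_simps)
  have "(lam c1 c2 s0 s1 3 has_derivative (\<lambda>h. X' h / (2 * lam c1 c2 s0 s1 3 P))) (at P)"
    unfolding lam_3 by (rule has_derivative_eq_rhs[OF has_derivative_real_sqrt[OF _ X]])
      (use assms(2) in \<open>simp_all add: fun_eq_iff field_simps\<close>)
  moreover have "X' (rv_rot \<mu> P) = 0" for \<mu>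
    by (simp add: X'_def D'_def rv_rot_def algebra_simps)
  ultimately show thesis
    using that by simp
qed

lemma has_derivative_rv_rot:
  assumes "(\<mu> has_derivative \<mu>') (at P)"
  shows "(rv_rot \<mu> has_derivative (\<lambda>h. vector [0, h$3, - h$2, 0,
            - (\<mu>' h * P$3 + \<mu> P * h$3), \<mu>' h * P$2 + \<mu> P * h$2])) (at P)"
  unfolding rv_rot_def[abs_def]
  by (rule has_derivative_vector_6; auto intro!: derivative_eq_intros assms simp: fun_eq_iff algebra_simps)

lemma has_derivative_rv_rad:
  assumes "s1 \<noteq> 0" and "(\<mu> has_derivative \<mu>') (at P)"
  defines "u \<equiv> (\<mu> P^2 - pb c1 c2 s0 s1 P) / (2 * s1)"
    and "u' \<equiv> \<lambda>h. (\<mu> P * \<mu>' h - s1 * h$1) / s1"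
  shows "(rv_rad c1 c2 s0 s1 \<mu> has_derivative (\<lambda>h. vector [u' h, h$2, h$3,
            - (\<mu>' h * u + \<mu> P * u' h), - (\<mu>' h * P$2 + \<mu> P * h$2),
            - (\<mu>' h * P$3 + \<mu> P * h$3)]))
          (at P)"
  unfolding rv_rad_def[abs_def] Let_def u_def u'_def
  by (rule has_derivative_vector_6;
      auto intro!: derivative_eq_intros assms(2) has_derivative_pb
        simp: fun_eq_iff field_simps power2_eq_square \<open>s1 \<noteq> 0\<close>)

lemma bracket_rv_rot_rv_rad:
  assumes "s1 \<noteq> 0" and "M P \<noteq> 0" and "M P^2 = pb c1 c2 s0 s1 P"
    and M: "(M has_derivative (\<lambda>h. s1 * h$1 / M P)) (at P)"
    and L: "(L has_derivative L') (at P)" and "L' (rv_rot M P) = 0"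
  shows "bracket (rv_rot M) (rv_rad c1 c2 s0 s1 L) P = ((M P - L P)^2 / (2 * M P)) *\<^sub>R rot56 P"
  unfolding bracket_def dir_v_eq_derivative[OF has_derivative_rv_rot[OF M]]
    dir_v_eq_derivative[OF has_derivative_rv_rad[OF \<open>s1 \<noteq> 0\<close> L]]
  using assms(1-3,6)
  by (simp add: vec_eq_iff forall_6 rv_rot_def rv_rad_def rot56_def Let_def field_simps power2_eq_square)

lemma dir_s_rv_rad:
  assumes "s1 \<noteq> 0" and "M P^2 = pb c1 c2 s0 s1 P"
    and "(M has_derivative (\<lambda>h. s1 * h$1 / M P)) (at P)"
  shows "dir_s M P (rv_rad c1 c2 s0 s1 L P) = (L P^2 - M P^2) / (2 * M P)"
  using assms by (simp add: dir_s_eq_derivative rv_rad_def Let_def)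

lemma regular_state_eigenvalues:
  assumes "s1 \<noteq> 0" and "regular_state c1 c2 s0 s1 P"
  shows "0 < pDelta c1 c2 s0 s1 P"
    and "0 < (pa c1 c2 s0 s1 P + pb c1 c2 s0 s1 P) / 2 - sqrt (pDelta c1 c2 s0 s1 P) / 2"
    and "0 < lam c1 c2 s0 s1 3 P" and "lam c1 c2 s0 s1 3 P \<le> lam c1 c2 s0 s1 2 P"
    and "0 < lam c1 c2 s0 s1 2 P" and "(lam c1 c2 s0 s1 2 P)^2 = pb c1 c2 s0 s1 P"
proof -
  define a b c d where "a = pa c1 c2 s0 s1 P" and "b = pb c1 c2 s0 s1 P"
    and "c = pc c1 c2 s0 s1 P" and "d = pd c1 c2 s0 s1 P"
  have b: "0 < b" and cd: "c^2 + d^2 < a * b"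
    using assms(2) by (simp_all add: regular_state_def a_def b_def c_def d_def)
  have "c^2 + d^2 = 4 * s1^2 * ((P$2)^2 + (P$3)^2)"
    by (simp add: c_def d_def pc_def pd_def algebra_simps)
  then have cd_pos: "0 < c^2 + d^2"
    using assms by (simp add: regular_state_def)
  have a: "0 < a"
    using b cd cd_pos by (smt (verit) mult_nonpos_nonneg)
  have D: "pDelta c1 c2 s0 s1 P = (a - b)^2 + 4 * (c^2 + d^2)"
    by (simp add: pDelta_def a_def b_def c_def d_def)
  show "0 < pDelta c1 c2 s0 s1 P"
    unfolding D using cd_pos by (smt (verit) zero_le_power2)
  have "pDelta c1 c2 s0 s1 P < (a + b)^2"
    unfolding D using cd by (simp add: power2_eq_square algebra_simps)
  then have "sqrt (pDelta c1 c2 s0 s1 P) < a + b"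
    using a b by (simp add: real_less_lsqrt)
  then show "0 < (pa c1 c2 s0 s1 P + pb c1 c2 s0 s1 P) / 2 - sqrt (pDelta c1 c2 s0 s1 P) / 2"
    by (simp add: a_def b_def)
  then show "0 < lam c1 c2 s0 s1 3 P"
    by (simp add: lam_3)
  have "a - b \<le> sqrt (pDelta c1 c2 s0 s1 P)"
    by (rule real_le_rsqrt) (simp add: D)
  then have "(pa c1 c2 s0 s1 P + pb c1 c2 s0 s1 P) / 2 - sqrt (pDelta c1 c2 s0 s1 P) / 2 \<le> b"
    by (simp add: a_def b_def field_simps)
  then show "lam c1 c2 s0 s1 3 P \<le> lam c1 c2 s0 s1 2 P"
    by (simp add: lam_2 lam_3 b_def)
  show "0 < lam c1 c2 s0 s1 2 P" and "(lam c1 c2 s0 s1 2 P)^2 = pb c1 c2 s0 s1 P"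
    using b by (simp_all add: lam_2 b_def)
qed

lemma brackets_and_ccoef_at_regular_state:
  assumes "s1 \<noteq> 0" and "regular_state c1 c2 s0 s1 P"
  defines "m \<equiv> lam c1 c2 s0 s1 2 P" and "l \<equiv> lam c1 c2 s0 s1 3 P"
  defines "E \<equiv> (m - l)^2 / (2 * m)"
  shows "bracket (rv c1 c2 s0 s1 2) (rv c1 c2 s0 s1 3) P = E *\<^sub>R rot56 P"
    and "bracket (rv c1 c2 s0 s1 4) (rv c1 c2 s0 s1 5) P = E *\<^sub>R rot56 P"
    and "ccoef c1 c2 s0 s1 3 2 P = 0" and "ccoef c1 c2 s0 s1 4 5 P = 0"
    and "ccoef c1 c2 s0 s1 2 3 P = (l^2 - m^2) / (2 * m)"
    and "ccoef c1 c2 s0 s1 5 4 P = - ((l^2 - m^2) / (2 * m))"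
proof -
  note eig = regular_state_eigenvalues[OF assms(1,2)]
  have b: "0 < pb c1 c2 s0 s1 P"
    using assms(2) by (simp add: regular_state_def)
  obtain L' where L: "(lam c1 c2 s0 s1 3 has_derivative L') (at P)"
    and L_rot: "\<And>\<mu>. L' (rv_rot \<mu> P) = 0"
    using has_derivative_lam_3[OF eig(1,2)] by blast
  have L4: "(lam c1 c2 s0 s1 4 has_derivative (\<lambda>h. - L' h)) (at P)"
    unfolding lam_4 by (auto intro!: derivative_eq_intros L)
  note M2 = has_derivative_lam_2[OF b] and M5 = has_derivative_lam_5[OF b]
  have m: "m \<noteq> 0" "m^2 = pb c1 c2 s0 s1 P"
    using eig(5,6) by (simp_all add: m_def)
  have lam_45: "lam c1 c2 s0 s1 5 P = - m" "lam c1 c2 s0 s1 4 P = - l"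
    by (simp_all add: lam_5 lam_4 m_def l_def)
  show "bracket (rv c1 c2 s0 s1 2) (rv c1 c2 s0 s1 3) P = E *\<^sub>R rot56 P"
    unfolding rv_2 rv_3 E_def m_def l_def
    using bracket_rv_rot_rv_rad[OF assms(1) _ _ M2 L L_rot] m by (simp add: m_def)
  have "bracket (rv c1 c2 s0 s1 5) (rv c1 c2 s0 s1 4) P = (- E) *\<^sub>R rot56 P"
    unfolding rv_5 rv_4
    using bracket_rv_rot_rv_rad[OF assms(1) _ _ M5 L4] m L_rot
    by (simp add: lam_45 E_def power2_commute)
  then show "bracket (rv c1 c2 s0 s1 4) (rv c1 c2 s0 s1 5) P = E *\<^sub>R rot56 P"
    by (simp add: bracket_swap[of "rv c1 c2 s0 s1 4"])
  show "ccoef c1 c2 s0 s1 3 2 P = 0" "ccoef c1 c2 s0 s1 4 5 P = 0"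
    by (simp_all add: ccoef_def rv_2 rv_5 dir_s_eq_derivative[OF L] dir_s_eq_derivative[OF L4] L_rot)
  show "ccoef c1 c2 s0 s1 2 3 P = (l^2 - m^2) / (2 * m)"
    using dir_s_rv_rad[OF assms(1) _ M2] m by (simp add: ccoef_def rv_3 m_def l_def)
  show "ccoef c1 c2 s0 s1 5 4 P = - ((l^2 - m^2) / (2 * m))"
    using dir_s_rv_rad[OF assms(1) _ M5] m by (simp add: ccoef_def rv_4 lam_45)
qed

lemma lv_inner_rot56:
  shows "lv c1 c2 s0 s1 1 P \<bullet> rot56 P = 0" and "lv c1 c2 s0 s1 3 P \<bullet> rot56 P = 0"
    and "lv c1 c2 s0 s1 4 P \<bullet> rot56 P = 0" and "lv c1 c2 s0 s1 6 P \<bullet> rot56 P = 0"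
  by (simp_all add: lv_def rot56_def Let_def inner_vector_6 algebra_simps)

lemma lv_inner_rot56_resonant:
  assumes "lam c1 c2 s0 s1 2 P \<noteq> 0" and "0 < (P$2)^2 + (P$3)^2"
  shows "lv c1 c2 s0 s1 2 P \<bullet> rot56 P = 1 / (2 * lam c1 c2 s0 s1 2 P)"
    and "lv c1 c2 s0 s1 5 P \<bullet> rot56 P = - 1 / (2 * lam c1 c2 s0 s1 2 P)"
proof -
  have "pM P * lam c1 c2 s0 s1 2 P \<noteq> 0"
    using assms by (simp add: pM_def)
  then show "lv c1 c2 s0 s1 2 P \<bullet> rot56 P = 1 / (2 * lam c1 c2 s0 s1 2 P)"
    and "lv c1 c2 s0 s1 5 P \<bullet> rot56 P = - 1 / (2 * lam c1 c2 s0 s1 2 P)"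
    by (simp_all add: lv_def rot56_def Let_def inner_vector_6 field_simps)
      (simp_all add: pM_def algebra_simps power2_eq_square)
qed

lemma vanishing_coefficients:
  assumes "s1 \<noteq> 0" and "regular_state c1 c2 s0 s1 P"
  shows "(\<forall>i\<in>{1,6}. gam c1 c2 s0 s1 i 2 3 P + gam c1 c2 s0 s1 i 3 2 P = 0 \<and>
                    gam c1 c2 s0 s1 i 4 5 P + gam c1 c2 s0 s1 i 5 4 P = 0) \<and>
    - ccoef c1 c2 s0 s1 3 2 P + gam c1 c2 s0 s1 3 3 2 P = 0 \<and>
    gam c1 c2 s0 s1 3 4 5 P + gam c1 c2 s0 s1 3 5 4 P = 0 \<and>
    - ccoef c1 c2 s0 s1 4 5 P + gam c1 c2 s0 s1 4 4 5 P = 0 \<and>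
    gam c1 c2 s0 s1 4 2 3 P + gam c1 c2 s0 s1 4 3 2 P = 0"
  using brackets_and_ccoef_at_regular_state[OF assms]
  by (simp add: gam_add_gam_swap gam_self bracket_swap[of "rv c1 c2 s0 s1 3"]
      bracket_swap[of "rv c1 c2 s0 s1 5"] lv_inner_rot56 lv_inner_rot56(1)[unfolded One_nat_def])

lemma resonant_coefficients:
  assumes "s1 \<noteq> 0" and "regular_state c1 c2 s0 s1 P"
  defines "m \<equiv> lam c1 c2 s0 s1 2 P" and "l \<equiv> lam c1 c2 s0 s1 3 P"
  defines "t \<equiv> (m - l) / m"
  shows "- ccoef c1 c2 s0 s1 2 3 P + gam c1 c2 s0 s1 2 2 3 P = (m - l) * (1 - t/2 - t^2/4)"
    and "gam c1 c2 s0 s1 2 4 5 P + gam c1 c2 s0 s1 2 5 4 P = - (m - l) * (t^2/4)"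
    and "- ccoef c1 c2 s0 s1 5 4 P + gam c1 c2 s0 s1 5 5 4 P = - (m - l) * (1 - t/2 - t^2/4)"
    and "gam c1 c2 s0 s1 5 2 3 P + gam c1 c2 s0 s1 5 3 2 P = (m - l) * (t^2/4)"
proof -
  have m: "0 < m" and \<rho>: "0 < (P$2)^2 + (P$3)^2"
    using regular_state_eigenvalues[OF assms(1,2)] assms(2)
    by (simp_all add: m_def regular_state_def)
  have lam_45: "lam c1 c2 s0 s1 4 P = - l" "lam c1 c2 s0 s1 5 P = - m"
    by (simp_all add: lam_4 lam_5 m_def l_def)
  note BC = brackets_and_ccoef_at_regular_state[OF assms(1,2), folded m_def l_def]
  note W = lv_inner_rot56_resonant[of P, folded m_def, OF _ \<rho>]
  show "- ccoef c1 c2 s0 s1 2 3 P + gam c1 c2 s0 s1 2 2 3 P = (m - l) * (1 - t/2 - t^2/4)"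
    using m
    by (simp add: gam_self BC W l_def[symmetric] m_def[symmetric] t_def field_simps power2_eq_square)
  show "gam c1 c2 s0 s1 2 4 5 P + gam c1 c2 s0 s1 2 5 4 P = - (m - l) * (t^2/4)"
    using m by (simp add: gam_add_gam_swap BC W lam_45 t_def field_simps power2_eq_square)
  show "- ccoef c1 c2 s0 s1 5 4 P + gam c1 c2 s0 s1 5 5 4 P = - (m - l) * (1 - t/2 - t^2/4)"
    using m
    by (simp add: gam_self BC W lam_45 bracket_swap[of "rv c1 c2 s0 s1 5"] t_def field_simps
        power2_eq_square)
  show "gam c1 c2 s0 s1 5 2 3 P + gam c1 c2 s0 s1 5 3 2 P = (m - l) * (t^2/4)"
    using m
    by (simp add: gam_add_gam_swap BC W l_def[symmetric] m_def[symmetric] t_def field_simps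
        power2_eq_square)
qed

lemma abs_resonant_factors_le_one:
  fixes t :: real
  assumes "0 \<le> t" and "t \<le> 1"
  shows "\<bar>1 - t/2 - t^2/4\<bar> \<le> 1" and "\<bar>t^2/4\<bar> \<le> 1"
proof -
  have "0 \<le> t^2" "t^2 \<le> 1"
    using power_le_one[OF assms, of 2] by simp_all
  with assms show "\<bar>1 - t/2 - t^2/4\<bar> \<le> 1" and "\<bar>t^2/4\<bar> \<le> 1"
    unfolding abs_le_iff by argo+
qed

lemma resonant_coefficients_bound:
  assumes "s1 \<noteq> 0" and "regular_state c1 c2 s0 s1 P"
  defines "d23 \<equiv> \<bar>lam c1 c2 s0 s1 2 P - lam c1 c2 s0 s1 3 P\<bar>"
  shows "\<bar>- ccoef c1 c2 s0 s1 2 3 P + gam c1 c2 s0 s1 2 2 3 P\<bar> \<le> d23"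
    and "\<bar>gam c1 c2 s0 s1 2 4 5 P + gam c1 c2 s0 s1 2 5 4 P\<bar> \<le> d23"
    and "\<bar>- ccoef c1 c2 s0 s1 5 4 P + gam c1 c2 s0 s1 5 5 4 P\<bar> \<le> d23"
    and "\<bar>gam c1 c2 s0 s1 5 2 3 P + gam c1 c2 s0 s1 5 3 2 P\<bar> \<le> d23"
proof -
  note eig = regular_state_eigenvalues[OF assms(1,2)]
  define t where "t = (lam c1 c2 s0 s1 2 P - lam c1 c2 s0 s1 3 P) / lam c1 c2 s0 s1 2 P"
  have "0 \<le> t" "t \<le> 1"
    using eig(3-5) by (simp_all add: t_def field_simps)
  note t = abs_resonant_factors_le_one[OF this]
  have le_d23: "\<bar>(lam c1 c2 s0 s1 2 P - lam c1 c2 s0 s1 3 P) * f\<bar> \<le> d23" if "\<bar>f\<bar> \<le> 1" for f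
    using mult_left_mono[OF that, of d23] by (simp add: d23_def abs_mult)
  show "\<bar>- ccoef c1 c2 s0 s1 2 3 P + gam c1 c2 s0 s1 2 2 3 P\<bar> \<le> d23"
    and "\<bar>gam c1 c2 s0 s1 2 4 5 P + gam c1 c2 s0 s1 2 5 4 P\<bar> \<le> d23"
    and "\<bar>- ccoef c1 c2 s0 s1 5 4 P + gam c1 c2 s0 s1 5 5 4 P\<bar> \<le> d23"
    and "\<bar>gam c1 c2 s0 s1 5 2 3 P + gam c1 c2 s0 s1 5 3 2 P\<bar> \<le> d23"
    unfolding resonant_coefficients[OF assms(1,2), folded t_def]
    using le_d23[OF t(1)] le_d23[OF t(2)] by (simp_all only: minus_mult_left abs_minus_cancel)
qed

end

lemma regular_state_near_zero:
  assumes "c1 \<noteq> 0" and "c2 \<noteq> 0"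
  obtains e where "0 < e"
    and "\<And>P. norm P < e \<Longrightarrow> 0 < (P$2)^2 + (P$3)^2 \<Longrightarrow> regular_state c1 c2 s0 s1 P"
proof -
  let ?S = "{P. 0 < pb c1 c2 s0 s1 P \<and>
    (pc c1 c2 s0 s1 P)^2 + (pd c1 c2 s0 s1 P)^2 < pa c1 c2 s0 s1 P * pb c1 c2 s0 s1 P}"
  have "open ?S"
    unfolding pa_def pb_def pc_def pd_def
    by (intro open_Collect_conj open_Collect_less continuous_intros)
  moreover have "0 \<in> ?S"
    using assms by (simp add: pa_def pb_def pc_def pd_def)
  ultimately obtain e where "0 < e" "ball 0 e \<subseteq> ?S"
    using open_contains_ball_eq by blast
  then show thesis
    by (intro that[of e]) (auto simp: regular_state_def subset_iff)
qed

theorem proposition3p2: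
  fixes c1 c2 s0 s1 :: real
  assumes "c1 > c2" and "c2 > 0" and "s0 * s1 \<noteq> 0"
  shows "\<exists>\<delta>0>0. \<forall>\<delta>. 0 < \<delta> \<and> \<delta> < \<delta>0 \<longrightarrow>
    (\<forall>P::real^6. P \<in> ball 0 (2*\<delta>) \<and> (P$2)^2 + (P$3)^2 > 0 \<longrightarrow>
       (\<forall>i\<in>{1,6}. gam c1 c2 s0 s1 i 2 3 P + gam c1 c2 s0 s1 i 3 2 P = 0 \<and>
                   gam c1 c2 s0 s1 i 4 5 P + gam c1 c2 s0 s1 i 5 4 P = 0) \<and>
       - ccoef c1 c2 s0 s1 3 2 P + gam c1 c2 s0 s1 3 3 2 P = 0 \<and>
       gam c1 c2 s0 s1 3 4 5 P + gam c1 c2 s0 s1 3 5 4 P = 0 \<and>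
       - ccoef c1 c2 s0 s1 4 5 P + gam c1 c2 s0 s1 4 4 5 P = 0 \<and>
       gam c1 c2 s0 s1 4 2 3 P + gam c1 c2 s0 s1 4 3 2 P = 0) \<and>
    (\<exists>C. \<forall>P::real^6. P \<in> ball 0 (2*\<delta>) \<and> (P$2)^2 + (P$3)^2 > 0 \<longrightarrow>
       (let d23 = \<bar>lam c1 c2 s0 s1 2 P - lam c1 c2 s0 s1 3 P\<bar> in
        \<bar>- ccoef c1 c2 s0 s1 2 3 P + gam c1 c2 s0 s1 2 2 3 P\<bar> \<le> C * d23 \<and>
        \<bar>gam c1 c2 s0 s1 2 4 5 P + gam c1 c2 s0 s1 2 5 4 P\<bar> \<le> C * d23 \<and>
        \<bar>- ccoef c1 c2 s0 s1 5 4 P + gam c1 c2 s0 s1 5 5 4 P\<bar> \<le> C * d23 \<and>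
        \<bar>gam c1 c2 s0 s1 5 2 3 P + gam c1 c2 s0 s1 5 3 2 P\<bar> \<le> C * d23))"
proof -
  have s1: "s1 \<noteq> 0"
    using assms(3) by simp
  obtain e where "0 < e"
    and regular: "\<And>P. norm P < e \<Longrightarrow> 0 < (P$2)^2 + (P$3)^2 \<Longrightarrow> regular_state c1 c2 s0 s1 P"
    using regular_state_near_zero[of c1 c2] assms(1,2) by (metis less_irrefl order.strict_trans)
  have "regular_state c1 c2 s0 s1 P"
    if "\<delta> < e/2" "P \<in> ball 0 (2*\<delta>)" "0 < (P$2)^2 + (P$3)^2" for \<delta> P
    using regular that by simp
  then show ?thesis
    using \<open>0 < e\<close> vanishing_coefficients[OF s1] resonant_coefficients_bound[OF s1]
    by (intro exI[of _ "e/2"]) (auto intro!: exI[of _ 1] simp: Let_def)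
qed

end
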